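(* Let $(p_{ij})_{i,j\in\{0,1\}}$ be a transition matrix with all $p_{ij}\in(0,1)$, and for $i\in\{0,1\}$, $n\in\mathbb N_0$ let $I_n^i$ be binomially $B(n,p_{i0})$ distributed. Let $(a_i(n))_{n\in\mathbb N_0}$, $(\varepsilon_i(n))_{n\in\mathbb N_0}$, $i\in\{0,1\}$, be real sequences satisfying $$a_i(n)=p_{i0}\mathbb E[a_0(I_n^i)]+p_{i1}\mathbb E[a_1(n-I_n^i)]+\varepsilon_i(n),\qquad i\in\{0,1\},\ n\in\mathbb N.$$ If $\varepsilon_i(n)=O(n^\alpha)$ for some $\alpha\in\mathbb R$ and both $i$, then as $n\to\infty$, $a_i(n)=O(1)$ if $\alpha<0$, $a_i(n)=O(n^\alpha)$ if $\alpha>0$, and $a_i(n)=O(\log n)$ if $\alpha=0$. *)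

theory Defs
  imports "HOL-Probability.Probability" "HOL-Library.Landau_Symbols"
begin

end

theory Submission
  imports Defs "HOL-Real_Asymp.Real_Asymp"
begin

text \<open>
  The bounds come from a comparison principle. Write \<open>T\<^sub>P f n = P \<bullet> E f(I) + (1 - P) \<bullet> E f(n - I)\<close>
  with \<open>I ~ B(n, P)\<close>. If \<open>\<phi> \<ge> 0\<close> satisfies the drift condition \<open>T\<^sub>P \<phi> n + \<delta> \<psi> n \<le> \<phi> n\<close> for large \<open>n\<close>
  and \<open>\<bar>\<epsilon>\<^sub>i\<bar> \<le> K \<psi>\<close>, then \<open>\<bar>a\<^sub>i\<bar> \<le> B + (K / \<delta>) \<phi>\<close> by strong induction on \<open>n\<close>: the recursion for
  \<open>a\<^sub>i(n)\<close> contains \<open>a\<^sub>0(n)\<close> and \<open>a\<^sub>1(n)\<close> only with total weight \<open>P\<^sup>n\<^sup>+\<^sup>1 + (1 - P)\<^sup>n\<^sup>+\<^sup>1 < 1\<close>.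
  Jensen's inequality supplies the functions \<open>\<phi>\<close>: \<open>(n + 1)\<^sup>\<alpha>\<close> for \<open>\<alpha> > 0\<close>, \<open>log (n + 1)\<close> for \<open>\<alpha> = 0\<close>
  (the drift is asymptotically the entropy of \<open>(P, 1 - P)\<close>) and \<open>1 - (n + 1)\<^sup>\<alpha>\<close> for \<open>\<alpha> < 0\<close>.
\<close>

section \<open>Binomial expectations and Jensen's inequality\<close>

lemma concave_on_powr: "0 \<le> p \<Longrightarrow> p \<le> 1 \<Longrightarrow> concave_on {0<..} (\<lambda>x::real. x powr p)"
  by (intro f''_le0_imp_concave derivative_eq_intros | simp add: mult_le_0_iff)+

lemma convex_on_powr_nonpos: "p \<le> 0 \<Longrightarrow> convex_on {0<..} (\<lambda>x::real. x powr p)"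
  by (intro f''_ge0_imp_convex derivative_eq_intros | simp add: zero_le_mult_iff mult_le_0_iff)+

definition binomial_expectation :: "nat \<Rightarrow> real \<Rightarrow> (nat \<Rightarrow> real) \<Rightarrow> real" where
  "binomial_expectation n P f = (\<Sum>k\<le>n. real (n choose k) * P ^ k * (1 - P) ^ (n - k) * f k)"

lemma expectation_binomial_pmf_eq_binomial_expectation:
  "P \<in> {0..1} \<Longrightarrow> measure_pmf.expectation (binomial_pmf n P) f = binomial_expectation n P f"
  by (simp add: expectation_binomial_pmf' binomial_expectation_def)

lemma binomial_weights_sum: "(\<Sum>k\<le>n. real (n choose k) * P ^ k * (1 - P) ^ (n - k)) = 1"
  using binomial_ring[of P "1 - P" n] by simp

lemma binomial_expectation_affine:
  "binomial_expectation n P (\<lambda>k. B + C * f k) = B + C * binomial_expectation n P f"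
proof -
  have "binomial_expectation n P (\<lambda>k. B + C * f k)
      = B * (\<Sum>k\<le>n. real (n choose k) * P ^ k * (1 - P) ^ (n - k)) + C * binomial_expectation n P f"
    by (simp add: binomial_expectation_def algebra_simps sum.distrib sum_distrib_left)
  then show ?thesis by (simp only: binomial_weights_sum mult_1_right)
qed

lemma binomial_expectation_mono:
  assumes "0 \<le> P" "P \<le> 1" "\<And>k. k \<le> n \<Longrightarrow> f k \<le> g k"
  shows "binomial_expectation n P f \<le> binomial_expectation n P g"
  unfolding binomial_expectation_def using assms by (intro sum_mono mult_left_mono) auto

lemma binomial_expectation_abs_le:
  assumes "0 \<le> P" "P \<le> 1" "\<And>k. k \<le> n \<Longrightarrow> \<bar>f k\<bar> \<le> g k"
  shows "\<bar>binomial_expectation n P f\<bar> \<le> binomial_expectation n P g"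
proof -
  have "\<bar>binomial_expectation n P f\<bar>
      \<le> (\<Sum>k\<le>n. \<bar>real (n choose k) * P ^ k * (1 - P) ^ (n - k) * f k\<bar>)"
    unfolding binomial_expectation_def by (rule sum_abs)
  also have "\<dots> = binomial_expectation n P (\<lambda>k. \<bar>f k\<bar>)"
    using assms(1,2) by (simp add: binomial_expectation_def abs_mult)
  also have "\<dots> \<le> binomial_expectation n P g"
    using assms by (intro binomial_expectation_mono) auto
  finally show ?thesis .
qed

lemma binomial_expectation_fun_upd:
  "binomial_expectation n P (f(n := M)) = binomial_expectation n P f + P ^ n * (M - f n)"
proof -
  have "f(n := M) = (\<lambda>k. f k + (if k = n then M - f n else 0))" by auto
  then have "binomial_expectation n P (f(n := M)) = binomial_expectation n P f
      + (\<Sum>k\<le>n. if k = n then real (n choose k) * P ^ k * (1 - P) ^ (n - k) * (M - f n) else 0)"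
    by (simp add: binomial_expectation_def algebra_simps sum.distrib if_distrib[of "(*) _"] cong: if_cong)
  then show ?thesis by simp
qed

lemma binomial_expectation_reflect:
  "binomial_expectation n P (\<lambda>k. f (n - k)) = binomial_expectation n (1 - P) f"
  unfolding binomial_expectation_def
  by (rule sum.reindex_bij_witness[of _ "\<lambda>k. n - k" "\<lambda>k. n - k"])
     (auto simp: binomial_symmetric[symmetric] mult_ac)

lemma binomial_expectation_id: "binomial_expectation n P real = real n * P"
proof (cases n)
  case (Suc m)
  have "binomial_expectation (Suc m) P real
      = (\<Sum>k\<le>m. real (Suc m choose Suc k) * P ^ Suc k * (1 - P) ^ (m - k) * real (Suc k))"
    unfolding binomial_expectation_def by (subst sum.atMost_Suc_shift) simp
  also have "\<dots> = (\<Sum>k\<le>m. real (Suc m) * P * (real (m choose k) * P ^ k * (1 - P) ^ (m - k)))"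
  proof (rule sum.cong)
    fix k
    have e: "real (Suc k) * real (Suc m choose Suc k) = real (Suc m) * real (m choose k)"
      using Suc_times_binomial_eq[of m k] by (metis of_nat_mult mult.commute)
    have "real (Suc m choose Suc k) * P ^ Suc k * (1 - P) ^ (m - k) * real (Suc k)
        = (real (Suc k) * real (Suc m choose Suc k)) * (P * (P ^ k * (1 - P) ^ (m - k)))"
      by (simp only: power_Suc mult_ac)
    also have "\<dots> = real (Suc m) * P * (real (m choose k) * P ^ k * (1 - P) ^ (m - k))"
      by (simp only: e mult_ac)
    finally show "real (Suc m choose Suc k) * P ^ Suc k * (1 - P) ^ (m - k) * real (Suc k)
        = real (Suc m) * P * (real (m choose k) * P ^ k * (1 - P) ^ (m - k))" .
  qed simp
  also have "\<dots> = real (Suc m) * P"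
    by (simp add: binomial_weights_sum flip: sum_distrib_left)
  finally show ?thesis using Suc by simp
qed (simp add: binomial_expectation_def)

lemma binomial_expectation_concave_le:
  assumes "concave_on {0<..} G" "0 \<le> P" "P \<le> 1"
  shows "binomial_expectation n P (\<lambda>k. G (real k + 1)) \<le> G (real n * P + 1)"
proof -
  define w where "w k = real (n choose k) * P ^ k * (1 - P) ^ (n - k)" for k
  have "sum w {..n} = 1"
    by (simp add: w_def binomial_weights_sum)
  moreover have "(\<Sum>k\<le>n. w k * (real k + 1)) = real n * P + 1"
    using binomial_expectation_affine[of n P 1 1 real] binomial_expectation_id[of n P]
    by (simp add: binomial_expectation_def w_def add.commute)
  moreover have "w k \<ge> 0" for k using assms(2,3) by (simp add: w_def)
  ultimately show ?thesis
    using concave_on_sum[OF _ _ assms(1), of "{..n}" w "\<lambda>k. real k + 1"]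
    by (simp add: binomial_expectation_def w_def)
qed

lemma binomial_expectation_convex_ge:
  assumes "convex_on {0<..} G" "0 \<le> P" "P \<le> 1"
  shows "G (real n * P + 1) \<le> binomial_expectation n P (\<lambda>k. G (real k + 1))"
  using binomial_expectation_concave_le[of "\<lambda>x. - G x" P n] binomial_expectation_affine[of n P 0 "-1"] assms
  by (simp add: concave_on_def)

text \<open>
  \<open>split_mean P f g n = P \<bullet> E f(I) + (1 - P) \<bullet> E g(n - I)\<close> with \<open>I ~ B(n, P)\<close>, written
  with \<open>n - I ~ B(n, 1 - P)\<close>.
\<close>

definition split_mean :: "real \<Rightarrow> (nat \<Rightarrow> real) \<Rightarrow> (nat \<Rightarrow> real) \<Rightarrow> nat \<Rightarrow> real" where
  "split_mean P f g n = P * binomial_expectation n P f + (1 - P) * binomial_expectation n (1 - P) g"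

lemma split_mean_affine:
  "split_mean P (\<lambda>k. B + C * f k) (\<lambda>k. B + C * g k) n = B + C * split_mean P f g n"
  by (simp add: split_mean_def binomial_expectation_affine algebra_simps)

lemma split_mean_mono:
  assumes "0 \<le> P" "P \<le> 1" "\<And>k. k \<le> n \<Longrightarrow> f k \<le> f' k" "\<And>k. k \<le> n \<Longrightarrow> g k \<le> g' k"
  shows "split_mean P f g n \<le> split_mean P f' g' n"
  unfolding split_mean_def using assms
  by (intro add_mono mult_left_mono binomial_expectation_mono) auto

lemma split_mean_abs_le:
  assumes "0 \<le> P" "P \<le> 1" "\<And>k. k \<le> n \<Longrightarrow> \<bar>x k\<bar> \<le> f k" "\<And>k. k \<le> n \<Longrightarrow> \<bar>y k\<bar> \<le> g k"
  shows "\<bar>split_mean P x y n\<bar> \<le> split_mean P f g n"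
proof -
  have "\<bar>binomial_expectation n P x\<bar> \<le> binomial_expectation n P f"
    "\<bar>binomial_expectation n (1 - P) y\<bar> \<le> binomial_expectation n (1 - P) g"
    using assms by (auto intro: binomial_expectation_abs_le)
  then show ?thesis
    unfolding split_mean_def using assms(1,2)
    by (intro order_trans[OF abs_triangle_ineq] add_mono) (auto simp: abs_mult intro: mult_left_mono)
qed

lemma split_mean_fun_upd:
  "split_mean P (f(n := M)) (f(n := M)) n
     = split_mean P f f n + (P ^ Suc n + (1 - P) ^ Suc n) * (M - f n)"
  by (simp add: split_mean_def binomial_expectation_fun_upd algebra_simps)

lemma split_mean_concave_le:
  assumes "concave_on {0<..} G" "0 \<le> P" "P \<le> 1"
  shows "split_mean P (\<lambda>k. G (real k + 1)) (\<lambda>k. G (real k + 1)) n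
           \<le> P * G (real n * P + 1) + (1 - P) * G (real n * (1 - P) + 1)"
  unfolding split_mean_def using assms
  by (intro add_mono mult_left_mono binomial_expectation_concave_le) auto

lemma split_mean_convex_ge:
  assumes "convex_on {0<..} G" "0 \<le> P" "P \<le> 1"
  shows "P * G (real n * P + 1) + (1 - P) * G (real n * (1 - P) + 1)
           \<le> split_mean P (\<lambda>k. G (real k + 1)) (\<lambda>k. G (real k + 1)) n"
  unfolding split_mean_def using assms
  by (intro add_mono mult_left_mono binomial_expectation_convex_ge) auto

section \<open>Drift functions\<close>

lemma tendsto_shifted_ratio: "(\<lambda>n. (real n * P + 1) / (real n + 1)) \<longlonglongrightarrow> P"
  by real_asymp

lemma tendsto_split_ratio:
  assumes "isCont G P" "isCont G (1 - P)"
  shows "(\<lambda>n. P * G ((real n * P + 1) / (real n + 1)) + (1 - P) * G ((real n * (1 - P) + 1) / (real n + 1)))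
           \<longlonglongrightarrow> P * G P + (1 - P) * G (1 - P)"
  using isCont_tendsto_compose[OF assms(1) tendsto_shifted_ratio]
    isCont_tendsto_compose[OF assms(2) tendsto_shifted_ratio]
  by (intro tendsto_intros)

lemma powr_shifted_ratio:
  assumes "0 \<le> P"
  shows "(real n * P + 1) powr \<gamma> = (real n + 1) powr \<gamma> * ((real n * P + 1) / (real n + 1)) powr \<gamma>"
  using assms by (simp add: powr_divide)

text \<open>
  For \<open>\<alpha> > 1\<close> the power is convex, so Jensen's inequality is applied to the concave power
  \<open>\<beta> = min \<alpha> 1\<close> after the crude estimate \<open>(k + 1)\<^sup>\<alpha>\<^sup>-\<^sup>\<beta> \<le> (n + 1)\<^sup>\<alpha>\<^sup>-\<^sup>\<beta>\<close>.
\<close>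

lemma split_mean_powr_le:
  assumes "0 \<le> P" "P \<le> 1" "0 < \<beta>" "\<beta> \<le> 1" "\<beta> \<le> \<alpha>"
  shows "split_mean P (\<lambda>k. (real k + 1) powr \<alpha>) (\<lambda>k. (real k + 1) powr \<alpha>) n
     \<le> (real n + 1) powr \<alpha> * (P * ((real n * P + 1) / (real n + 1)) powr \<beta>
                                + (1 - P) * ((real n * (1 - P) + 1) / (real n + 1)) powr \<beta>)"
proof -
  have Q: "0 \<le> 1 - P" using assms by simp
  define c where "c = (real n + 1) powr (\<alpha> - \<beta>)"
  have "(real k + 1) powr \<alpha> \<le> 0 + c * (real k + 1) powr \<beta>" if "k \<le> n" for k
  proof -
    have "(real k + 1) powr \<alpha> = (real k + 1) powr (\<alpha> - \<beta>) * (real k + 1) powr \<beta>"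
      by (simp flip: powr_add)
    also have "\<dots> \<le> c * (real k + 1) powr \<beta>"
      unfolding c_def using that assms by (intro mult_right_mono powr_mono2) auto
    finally show ?thesis by simp
  qed
  then have "split_mean P (\<lambda>k. (real k + 1) powr \<alpha>) (\<lambda>k. (real k + 1) powr \<alpha>) n
      \<le> split_mean P (\<lambda>k. 0 + c * (real k + 1) powr \<beta>) (\<lambda>k. 0 + c * (real k + 1) powr \<beta>) n"
    using assms by (intro split_mean_mono) auto
  also have "\<dots> = c * split_mean P (\<lambda>k. (real k + 1) powr \<beta>) (\<lambda>k. (real k + 1) powr \<beta>) n"
    by (simp only: split_mean_affine)
  also have "\<dots> \<le> c * (P * (real n * P + 1) powr \<beta> + (1 - P) * (real n * (1 - P) + 1) powr \<beta>)"
    using split_mean_concave_le[OF concave_on_powr[of \<beta>], of P n] assms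
    by (intro mult_left_mono) (auto simp: c_def)
  also have "\<dots> = c * (real n + 1) powr \<beta> * (P * ((real n * P + 1) / (real n + 1)) powr \<beta>
                                + (1 - P) * ((real n * (1 - P) + 1) / (real n + 1)) powr \<beta>)"
    unfolding powr_shifted_ratio[OF assms(1)] powr_shifted_ratio[OF Q] by (simp add: algebra_simps)
  also have "c * (real n + 1) powr \<beta> = (real n + 1) powr \<alpha>"
    by (simp add: c_def flip: powr_add)
  finally show ?thesis .
qed

lemma split_mean_powr_ge:
  assumes "0 \<le> P" "P \<le> 1" "\<alpha> \<le> 0"
  shows "(real n + 1) powr \<alpha> * (P * ((real n * P + 1) / (real n + 1)) powr \<alpha>
                                + (1 - P) * ((real n * (1 - P) + 1) / (real n + 1)) powr \<alpha>)
     \<le> split_mean P (\<lambda>k. (real k + 1) powr \<alpha>) (\<lambda>k. (real k + 1) powr \<alpha>) n"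
proof -
  have Q: "0 \<le> 1 - P" using assms by simp
  have "P * (real n * P + 1) powr \<alpha> + (1 - P) * (real n * (1 - P) + 1) powr \<alpha>
      = (real n + 1) powr \<alpha> * (P * ((real n * P + 1) / (real n + 1)) powr \<alpha>
                                + (1 - P) * ((real n * (1 - P) + 1) / (real n + 1)) powr \<alpha>)"
    unfolding powr_shifted_ratio[OF assms(1)] powr_shifted_ratio[OF Q] by (simp add: algebra_simps)
  with split_mean_convex_ge[OF convex_on_powr_nonpos[OF assms(3)] assms(1,2), of n]
  show ?thesis by simp
qed

lemma split_mean_powr_drift:
  assumes "0 < P" "P < 1" "0 < \<alpha>"
  shows "\<exists>\<delta>>0. eventually (\<lambda>n. split_mean P (\<lambda>k. (real k + 1) powr \<alpha>) (\<lambda>k. (real k + 1) powr \<alpha>) n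
                             + \<delta> * (real n + 1) powr \<alpha> \<le> (real n + 1) powr \<alpha>) at_top"
proof -
  define \<beta> where "\<beta> = min \<alpha> 1"
  define G where "G x = x powr \<beta>" for x :: real
  define \<theta> where "\<theta> = P * G P + (1 - P) * G (1 - P)"
  have "0 < \<beta>" using assms by (simp add: \<beta>_def)
  have "\<theta> < 1"
  proof -
    have "G P < 1" "G (1 - P) < 1" using assms \<open>0 < \<beta>\<close> by (simp_all add: G_def powr01_less_one)
    then have "P * G P < P" "(1 - P) * G (1 - P) < 1 - P" using assms by simp_all
    then show ?thesis by (simp add: \<theta>_def)
  qed
  have "(\<lambda>n. P * G ((real n * P + 1) / (real n + 1)) + (1 - P) * G ((real n * (1 - P) + 1) / (real n + 1)))
          \<longlonglongrightarrow> \<theta>"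
    unfolding \<theta>_def using assms by (intro tendsto_split_ratio) (auto simp: G_def intro!: continuous_intros)
  moreover have "\<theta> < (1 + \<theta>) / 2" using \<open>\<theta> < 1\<close> by simp
  ultimately have "eventually (\<lambda>n. P * G ((real n * P + 1) / (real n + 1))
                            + (1 - P) * G ((real n * (1 - P) + 1) / (real n + 1)) < (1 + \<theta>) / 2) at_top"
    by (rule order_tendstoD(2))
  then have "eventually (\<lambda>n. split_mean P (\<lambda>k. (real k + 1) powr \<alpha>) (\<lambda>k. (real k + 1) powr \<alpha>) n
                             + (1 - \<theta>) / 2 * (real n + 1) powr \<alpha> \<le> (real n + 1) powr \<alpha>) at_top"
  proof eventually_elim
    case (elim n)
    have "split_mean P (\<lambda>k. (real k + 1) powr \<alpha>) (\<lambda>k. (real k + 1) powr \<alpha>) n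
        \<le> (real n + 1) powr \<alpha> * (P * G ((real n * P + 1) / (real n + 1))
                                  + (1 - P) * G ((real n * (1 - P) + 1) / (real n + 1)))"
      unfolding G_def using assms \<open>0 < \<beta>\<close> by (intro split_mean_powr_le) (simp_all add: \<beta>_def)
    also have "\<dots> \<le> (real n + 1) powr \<alpha> * ((1 + \<theta>) / 2)"
      using elim by (intro mult_left_mono) simp_all
    finally show ?case by (simp add: field_simps)
  qed
  moreover have "(1 - \<theta>) / 2 > 0" using \<open>\<theta> < 1\<close> by simp
  ultimately show ?thesis by blast
qed

lemma split_mean_one_minus_powr_drift:
  assumes "0 < P" "P < 1" "\<alpha> < 0"
  shows "\<exists>\<delta>>0. eventually (\<lambda>n. split_mean P (\<lambda>k. 1 - (real k + 1) powr \<alpha>) (\<lambda>k. 1 - (real k + 1) powr \<alpha>) n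
                             + \<delta> * (real n + 1) powr \<alpha> \<le> 1 - (real n + 1) powr \<alpha>) at_top"
proof -
  define G where "G x = x powr \<alpha>" for x :: real
  define \<kappa> where "\<kappa> = P * G P + (1 - P) * G (1 - P)"
  have "1 < \<kappa>"
  proof -
    have "1 < G P" "1 < G (1 - P)"
      using assms powr_less_mono2_neg[of \<alpha> P 1] powr_less_mono2_neg[of \<alpha> "1 - P" 1] by (simp_all add: G_def)
    then have "P < P * G P" "1 - P < (1 - P) * G (1 - P)" using assms by simp_all
    then show ?thesis by (simp add: \<kappa>_def)
  qed
  have "(\<lambda>n. P * G ((real n * P + 1) / (real n + 1)) + (1 - P) * G ((real n * (1 - P) + 1) / (real n + 1)))
          \<longlonglongrightarrow> \<kappa>"
    unfolding \<kappa>_def using assms by (intro tendsto_split_ratio) (auto simp: G_def intro!: continuous_intros)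
  moreover have "(1 + \<kappa>) / 2 < \<kappa>" using \<open>1 < \<kappa>\<close> by simp
  ultimately have "eventually (\<lambda>n. (1 + \<kappa>) / 2 < P * G ((real n * P + 1) / (real n + 1))
                            + (1 - P) * G ((real n * (1 - P) + 1) / (real n + 1))) at_top"
    by (rule order_tendstoD(1))
  then have "eventually (\<lambda>n. split_mean P (\<lambda>k. 1 - (real k + 1) powr \<alpha>) (\<lambda>k. 1 - (real k + 1) powr \<alpha>) n
                             + (\<kappa> - 1) / 2 * (real n + 1) powr \<alpha> \<le> 1 - (real n + 1) powr \<alpha>) at_top"
  proof eventually_elim
    case (elim n)
    have "(real n + 1) powr \<alpha> * ((1 + \<kappa>) / 2)
        \<le> (real n + 1) powr \<alpha> * (P * G ((real n * P + 1) / (real n + 1))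
                                  + (1 - P) * G ((real n * (1 - P) + 1) / (real n + 1)))"
      using elim by (intro mult_left_mono) simp_all
    also have "\<dots> \<le> split_mean P (\<lambda>k. (real k + 1) powr \<alpha>) (\<lambda>k. (real k + 1) powr \<alpha>) n"
      unfolding G_def using assms by (intro split_mean_powr_ge) simp_all
    also have "\<dots> = 1 - split_mean P (\<lambda>k. 1 - (real k + 1) powr \<alpha>) (\<lambda>k. 1 - (real k + 1) powr \<alpha>) n"
      using split_mean_affine[of P 1 "-1" "\<lambda>k. (real k + 1) powr \<alpha>" "\<lambda>k. (real k + 1) powr \<alpha>" n] by simp
    finally show ?case by (simp add: field_simps)
  qed
  moreover have "(\<kappa> - 1) / 2 > 0" using \<open>1 < \<kappa>\<close> by simp
  ultimately show ?thesis by blast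
qed

lemma split_mean_ln_drift:
  assumes "0 < P" "P < 1"
  shows "\<exists>\<delta>>0. eventually (\<lambda>n. split_mean P (\<lambda>k. ln (real k + 1)) (\<lambda>k. ln (real k + 1)) n + \<delta>
                             \<le> ln (real n + 1)) at_top"
proof -
  define \<eta> where "\<eta> = P * ln P + (1 - P) * ln (1 - P)"
  have "\<eta> < 0"
  proof -
    have "ln P < 0" "ln (1 - P) < 0" using assms by simp_all
    then have "P * ln P < 0" "(1 - P) * ln (1 - P) < 0" using assms by (simp_all add: mult_pos_neg)
    then show ?thesis by (simp add: \<eta>_def)
  qed
  have "(\<lambda>n. P * ln ((real n * P + 1) / (real n + 1)) + (1 - P) * ln ((real n * (1 - P) + 1) / (real n + 1)))
          \<longlonglongrightarrow> \<eta>"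
    unfolding \<eta>_def using assms by (intro tendsto_split_ratio) (auto intro!: continuous_intros)
  moreover have "\<eta> < \<eta> / 2" using \<open>\<eta> < 0\<close> by simp
  ultimately have "eventually (\<lambda>n. P * ln ((real n * P + 1) / (real n + 1))
                            + (1 - P) * ln ((real n * (1 - P) + 1) / (real n + 1)) < \<eta> / 2) at_top"
    by (rule order_tendstoD(2))
  then have "eventually (\<lambda>n. split_mean P (\<lambda>k. ln (real k + 1)) (\<lambda>k. ln (real k + 1)) n + - \<eta> / 2
                             \<le> ln (real n + 1)) at_top"
  proof eventually_elim
    case (elim n)
    have pos: "0 < real n * P + 1" "0 < real n * (1 - P) + 1"
      using assms by (simp_all add: add_nonneg_pos)
    have "split_mean P (\<lambda>k. ln (real k + 1)) (\<lambda>k. ln (real k + 1)) n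
        \<le> P * ln (real n * P + 1) + (1 - P) * ln (real n * (1 - P) + 1)"
      using assms by (intro split_mean_concave_le ln_concave) simp_all
    also have "\<dots> = ln (real n + 1) + (P * ln ((real n * P + 1) / (real n + 1))
                                        + (1 - P) * ln ((real n * (1 - P) + 1) / (real n + 1)))"
      using pos by (simp add: ln_div algebra_simps)
    finally show ?case using elim by simp
  qed
  moreover have "- \<eta> / 2 > 0" using \<open>\<eta> < 0\<close> by simp
  ultimately show ?thesis by blast
qed

section \<open>The comparison principle\<close>

lemma power_Suc_add_power_Suc_less_one:
  fixes P :: real
  assumes "0 < P" "P < 1" "n \<ge> 1"
  shows "P ^ Suc n + (1 - P) ^ Suc n < 1"
proof -
  obtain m where "n = Suc m" using assms(3) by (cases n) auto
  then have "P ^ n < 1" "(1 - P) ^ n < 1"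
    using assms by (simp_all only: power_Suc_less_one diff_gt_0_iff_gt diff_less)
  then have "P * P ^ n < P" "(1 - P) * (1 - P) ^ n < 1 - P"
    using assms by simp_all
  then show ?thesis by simp
qed

lemma bigo_one_plus_of_affine_bound:
  fixes f \<phi> :: "nat \<Rightarrow> real"
  assumes "\<And>n. \<bar>f n\<bar> \<le> B + C * \<phi> n" "C \<ge> 0" "\<And>n. 0 \<le> \<phi> n"
  shows "f \<in> O(\<lambda>n. 1 + \<phi> n)"
proof -
  have "\<bar>f n\<bar> \<le> (\<bar>B\<bar> + C + 1) * \<bar>1 + \<phi> n\<bar>" for n
  proof -
    have "\<bar>f n\<bar> \<le> \<bar>B\<bar> * 1 + C * \<phi> n" using assms(1)[of n] by linarith
    also have "\<dots> \<le> \<bar>B\<bar> * (1 + \<phi> n) + C * (1 + \<phi> n)"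
      using assms(2) assms(3)[of n] by (intro add_mono mult_left_mono) simp_all
    also have "\<dots> \<le> (\<bar>B\<bar> + C + 1) * \<bar>1 + \<phi> n\<bar>"
      using assms(3)[of n] by (simp add: algebra_simps)
    finally show ?thesis .
  qed
  moreover have "\<bar>B\<bar> + C + 1 > 0" using assms(2) by (simp add: add_nonneg_pos)
  ultimately show ?thesis
    by (intro landau_o.bigI[where c = "\<bar>B\<bar> + C + 1"] always_eventually allI) simp_all
qed

locale split_recursion =
  fixes P :: "nat \<Rightarrow> real" and a eps :: "nat \<Rightarrow> nat \<Rightarrow> real"
  assumes P_range: "i \<in> {0,1} \<Longrightarrow> 0 < P i \<and> P i < 1"
    and recursion: "i \<in> {0,1} \<Longrightarrow> n \<ge> 1 \<Longrightarrow> a i n = split_mean (P i) (a 0) (a 1) n + eps i n"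
begin

lemma abs_le_supersolution:
  assumes initial: "\<And>i n. i \<in> {0,1} \<Longrightarrow> n < N \<Longrightarrow> \<bar>a i n\<bar> \<le> f n"
    and "N \<ge> 1"
    and super: "\<And>i n. i \<in> {0,1} \<Longrightarrow> n \<ge> N \<Longrightarrow> split_mean (P i) f f n + \<bar>eps i n\<bar> \<le> f n"
  shows "i \<in> {0,1} \<Longrightarrow> \<bar>a i n\<bar> \<le> f n"
proof (induction n arbitrary: i rule: less_induct)
  case (less n)
  show ?case
  proof (cases "n < N")
    case True
    then show ?thesis using initial less.prems by blast
  next
    case False
    then have n: "n \<ge> N" "n \<ge> 1" using \<open>N \<ge> 1\<close> by auto
    define M where "M = max (max \<bar>a 0 n\<bar> \<bar>a 1 n\<bar>) (f n)"
    define c where "c i = P i ^ Suc n + (1 - P i) ^ Suc n" for i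
    \<comment> \<open>Raising \<open>f n\<close> to \<open>M\<close> raises the right-hand side only by \<open>c i * (M - f n)\<close> with \<open>c i < 1\<close>.\<close>
    have step: "\<bar>a i n\<bar> \<le> f n + c i * (M - f n)" if i: "i \<in> {0,1}" for i
    proof -
      have bound: "\<bar>a j k\<bar> \<le> (f(n := M)) k" if "j \<in> {0,1}" "k \<le> n" for j k
        using less.IH[of k j] that by (cases "k = n") (auto simp: M_def)
      have "\<bar>a i n\<bar> \<le> \<bar>split_mean (P i) (a 0) (a 1) n\<bar> + \<bar>eps i n\<bar>"
        unfolding recursion[OF i n(2)] by (rule abs_triangle_ineq)
      also have "\<dots> \<le> split_mean (P i) (f(n := M)) (f(n := M)) n + \<bar>eps i n\<bar>"
        using P_range[OF i] bound by (intro add_right_mono split_mean_abs_le) auto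
      also have "\<dots> \<le> f n + c i * (M - f n)"
        using super[OF i n(1)] by (simp add: split_mean_fun_upd c_def)
      finally show ?thesis .
    qed
    have "M \<le> f n"
    proof (rule ccontr)
      assume "\<not> M \<le> f n"
      then obtain j where j: "j \<in> {0,1}" "\<bar>a j n\<bar> = M" "f n < M"
        unfolding M_def by (cases "\<bar>a 0 n\<bar> \<le> \<bar>a 1 n\<bar>") (auto simp: max_def split: if_splits)
      have "c j < 1"
        unfolding c_def by (rule power_Suc_add_power_Suc_less_one) (use P_range[OF j(1)] n(2) in auto)
      then have "c j * (M - f n) < M - f n" using j(3) by simp
      then show False using step[OF j(1)] j(2) by simp
    qed
    then show ?thesis using less.prems unfolding M_def by auto
  qed
qed

lemma abs_le_by_drift:
  assumes \<phi>_nonneg: "\<And>n. 0 \<le> \<phi> n" and "\<delta> > 0" "K \<ge> 0"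
    and drift: "\<And>i n. i \<in> {0,1} \<Longrightarrow> n \<ge> N \<Longrightarrow> split_mean (P i) \<phi> \<phi> n + \<delta> * \<psi> n \<le> \<phi> n"
    and eps: "\<And>i n. i \<in> {0,1} \<Longrightarrow> n \<ge> N \<Longrightarrow> \<bar>eps i n\<bar> \<le> K * \<psi> n"
  shows "\<exists>B. \<forall>i\<in>{0,1}. \<forall>n. \<bar>a i n\<bar> \<le> B + K / \<delta> * \<phi> n"
proof -
  define N' where "N' = max N 1"
  define B where "B = (\<Sum>n<N'. \<bar>a 0 n\<bar> + \<bar>a 1 n\<bar>)"
  define C where "C = K / \<delta>"
  have "C \<ge> 0" using \<open>\<delta> > 0\<close> \<open>K \<ge> 0\<close> by (simp add: C_def)
  have initial: "\<bar>a i n\<bar> \<le> B + C * \<phi> n" if "i \<in> {0,1}" "n < N'" for i n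
  proof -
    have "\<bar>a i n\<bar> \<le> \<bar>a 0 n\<bar> + \<bar>a 1 n\<bar>" using that(1) by auto
    also have "\<dots> \<le> B"
      unfolding B_def using that(2) by (intro member_le_sum) auto
    also have "\<dots> \<le> B + C * \<phi> n" using \<open>C \<ge> 0\<close> \<phi>_nonneg by simp
    finally show ?thesis .
  qed
  have super: "split_mean (P i) (\<lambda>k. B + C * \<phi> k) (\<lambda>k. B + C * \<phi> k) n + \<bar>eps i n\<bar> \<le> B + C * \<phi> n"
    if i: "i \<in> {0,1}" and n: "n \<ge> N'" for i n
  proof -
    have "n \<ge> N" using n by (simp add: N'_def)
    then have "split_mean (P i) \<phi> \<phi> n \<le> \<phi> n - \<delta> * \<psi> n" "\<bar>eps i n\<bar> \<le> K * \<psi> n"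
      using drift[OF i] eps[OF i] by (simp_all add: algebra_simps)
    then have "C * split_mean (P i) \<phi> \<phi> n + \<bar>eps i n\<bar> \<le> C * (\<phi> n - \<delta> * \<psi> n) + K * \<psi> n"
      using \<open>C \<ge> 0\<close> by (intro add_mono mult_left_mono)
    also have "\<dots> = C * \<phi> n" using \<open>\<delta> > 0\<close> by (simp add: C_def algebra_simps)
    finally show ?thesis by (simp add: split_mean_affine)
  qed
  have "\<bar>a i n\<bar> \<le> B + C * \<phi> n" if "i \<in> {0,1}" for i n
    using abs_le_supersolution[where f = "\<lambda>n. B + C * \<phi> n", OF initial _ super that]
    by (simp add: N'_def)
  then show ?thesis unfolding C_def by blast
qed

lemma bigo_by_drift:
  assumes eps: "\<And>i. i \<in> {0,1} \<Longrightarrow> eps i \<in> O(\<psi>)"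
    and \<psi>_nonneg: "\<And>n. 0 \<le> \<psi> n" and \<phi>_nonneg: "\<And>n. 0 \<le> \<phi> n"
    and drift: "\<And>i. i \<in> {0,1} \<Longrightarrow> \<exists>\<delta>>0. eventually (\<lambda>n. split_mean (P i) \<phi> \<phi> n + \<delta> * \<psi> n \<le> \<phi> n) at_top"
    and i: "i \<in> {0,1}"
  shows "a i \<in> O(\<lambda>n. 1 + \<phi> n)"
proof -
  obtain \<delta>0 \<delta>1 where \<delta>: "\<delta>0 > 0" "\<delta>1 > 0"
    and drift0: "eventually (\<lambda>n. split_mean (P 0) \<phi> \<phi> n + \<delta>0 * \<psi> n \<le> \<phi> n) at_top"
    and drift1: "eventually (\<lambda>n. split_mean (P 1) \<phi> \<phi> n + \<delta>1 * \<psi> n \<le> \<phi> n) at_top"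
    using drift[of 0] drift[of 1] by auto
  obtain c0 c1 where c: "c0 > 0" "c1 > 0"
    and eps0: "eventually (\<lambda>n. \<bar>eps 0 n\<bar> \<le> c0 * \<psi> n) at_top"
    and eps1: "eventually (\<lambda>n. \<bar>eps 1 n\<bar> \<le> c1 * \<psi> n) at_top"
    using eps[of 0] eps[of 1] \<psi>_nonneg by (auto elim!: landau_o.bigE)
  define \<delta> K where "\<delta> = min \<delta>0 \<delta>1" and "K = max c0 c1"
  have mono: "\<delta> * \<psi> n \<le> \<delta>0 * \<psi> n" "\<delta> * \<psi> n \<le> \<delta>1 * \<psi> n"
    "c0 * \<psi> n \<le> K * \<psi> n" "c1 * \<psi> n \<le> K * \<psi> n" for n
    using \<psi>_nonneg[of n] by (auto simp: \<delta>_def K_def intro: mult_right_mono)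
  from drift0 drift1 eps0 eps1
  have "eventually (\<lambda>n. \<forall>i\<in>{0,1}. split_mean (P i) \<phi> \<phi> n + \<delta> * \<psi> n \<le> \<phi> n
                              \<and> \<bar>eps i n\<bar> \<le> K * \<psi> n) at_top"
  proof eventually_elim
    case (elim n)
    then show ?case using mono[of n] by auto
  qed
  then obtain N where N: "\<And>i n. i \<in> {0,1} \<Longrightarrow> n \<ge> N \<Longrightarrow> split_mean (P i) \<phi> \<phi> n + \<delta> * \<psi> n \<le> \<phi> n
                              \<and> \<bar>eps i n\<bar> \<le> K * \<psi> n"
    unfolding eventually_at_top_linorder by blast
  have "\<delta> > 0" "K \<ge> 0" using \<delta> c by (simp_all add: \<delta>_def K_def)
  then have "\<exists>B. \<forall>i\<in>{0,1}. \<forall>n. \<bar>a i n\<bar> \<le> B + K / \<delta> * \<phi> n"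
    using N by (intro abs_le_by_drift[OF \<phi>_nonneg]) auto
  then obtain B where "\<And>n. \<bar>a i n\<bar> \<le> B + K / \<delta> * \<phi> n"
    using i by blast
  then show ?thesis
    using \<open>\<delta> > 0\<close> \<open>K \<ge> 0\<close> \<phi>_nonneg by (intro bigo_one_plus_of_affine_bound[where C = "K / \<delta>"]) auto
qed

lemma bigo_powr:
  assumes "\<alpha> > 0" and eps: "\<And>i. i \<in> {0,1} \<Longrightarrow> eps i \<in> O(\<lambda>n. real n powr \<alpha>)" and i: "i \<in> {0,1}"
  shows "a i \<in> O(\<lambda>n. real n powr \<alpha>)"
proof -
  have "eps j \<in> O(\<lambda>n. (real n + 1) powr \<alpha>)" if "j \<in> {0,1}" for j
    using eps[OF that] by (rule landau_o.big_trans) real_asymp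
  then have "a i \<in> O(\<lambda>n. 1 + (real n + 1) powr \<alpha>)"
    using split_mean_powr_drift P_range \<open>\<alpha> > 0\<close> by (intro bigo_by_drift[OF _ _ _ _ i]) auto
  also have "(\<lambda>n. 1 + (real n + 1) powr \<alpha>) \<in> O(\<lambda>n. real n powr \<alpha>)"
    using \<open>\<alpha> > 0\<close> by real_asymp
  finally show ?thesis .
qed

lemma bigo_one:
  assumes "\<alpha> < 0" and eps: "\<And>i. i \<in> {0,1} \<Longrightarrow> eps i \<in> O(\<lambda>n. real n powr \<alpha>)" and i: "i \<in> {0,1}"
  shows "a i \<in> O(\<lambda>n. 1)"
proof -
  have "eps j \<in> O(\<lambda>n. (real n + 1) powr \<alpha>)" if "j \<in> {0,1}" for j
    using eps[OF that] by (rule landau_o.big_trans) real_asymp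
  moreover have "(real n + 1) powr \<alpha> \<le> 1" for n
    using powr_mono2'[of \<alpha> 1 "real n + 1"] \<open>\<alpha> < 0\<close> by simp
  ultimately have "a i \<in> O(\<lambda>n. 1 + (1 - (real n + 1) powr \<alpha>))"
    using split_mean_one_minus_powr_drift P_range \<open>\<alpha> < 0\<close> by (intro bigo_by_drift[OF _ _ _ _ i]) auto
  also have "(\<lambda>n. 1 + (1 - (real n + 1) powr \<alpha>)) \<in> O(\<lambda>n. 1)"
    using \<open>\<alpha> < 0\<close> by real_asymp
  finally show ?thesis .
qed

lemma bigo_ln:
  assumes eps: "\<And>i. i \<in> {0,1} \<Longrightarrow> eps i \<in> O(\<lambda>n. 1)" and i: "i \<in> {0,1}"
  shows "a i \<in> O(\<lambda>n. ln (real n))"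
proof -
  have "a i \<in> O(\<lambda>n. 1 + ln (real n + 1))"
    using split_mean_ln_drift P_range by (intro bigo_by_drift[OF eps _ _ _ i]) auto
  also have "(\<lambda>n. 1 + ln (real n + 1)) \<in> O(\<lambda>n. ln (real n))"
    by real_asymp
  finally show ?thesis .
qed

end

theorem lemma4p3:
  fixes p :: "nat \<Rightarrow> nat \<Rightarrow> real"
    and a eps :: "nat \<Rightarrow> nat \<Rightarrow> real"
    and \<alpha> :: real
  assumes p_range: "\<And>i j. i \<in> {0,1} \<Longrightarrow> j \<in> {0,1} \<Longrightarrow> 0 < p i j \<and> p i j < 1"
    and p_stoch: "\<And>i. i \<in> {0,1} \<Longrightarrow> p i 0 + p i 1 = 1"
    and rec: "\<And>i n. i \<in> {0,1} \<Longrightarrow> n \<ge> 1 \<Longrightarrow>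
       a i n = p i 0 * measure_pmf.expectation (binomial_pmf n (p i 0)) (\<lambda>k. a 0 k)
             + p i 1 * measure_pmf.expectation (binomial_pmf n (p i 0)) (\<lambda>k. a 1 (n - k))
             + eps i n"
    and eps_O: "\<And>i. i \<in> {0,1} \<Longrightarrow> (\<lambda>n. eps i n) \<in> O(\<lambda>n. real n powr \<alpha>)"
  shows "\<forall>i\<in>{0,1}.
           (\<alpha> < 0 \<longrightarrow> (\<lambda>n. a i n) \<in> O(\<lambda>n. 1)) \<and>
           (\<alpha> > 0 \<longrightarrow> (\<lambda>n. a i n) \<in> O(\<lambda>n. real n powr \<alpha>)) \<and>
           (\<alpha> = 0 \<longrightarrow> (\<lambda>n. a i n) \<in> O(\<lambda>n. ln (real n)))"
proof -
  interpret split_recursion "\<lambda>i. p i 0" a eps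
  proof
    fix i n :: nat assume i: "i \<in> {0,1}"
    then show "0 < p i 0 \<and> p i 0 < 1" using p_range by blast
    assume "n \<ge> 1"
    with i show "a i n = split_mean (p i 0) (a 0) (a 1) n + eps i n"
      using rec p_stoch[OF i] p_range[OF i, of 0]
      by (simp add: split_mean_def expectation_binomial_pmf_eq_binomial_expectation
                    binomial_expectation_reflect eq_diff_eq')
  qed
  have "eps i \<in> O(\<lambda>n. 1)" if "i \<in> {0,1}" "\<alpha> = 0" for i
    using eps_O[OF that(1)] unfolding \<open>\<alpha> = 0\<close> by (rule landau_o.big_trans) real_asymp
  then show ?thesis
    using bigo_one[OF _ eps_O] bigo_powr[OF _ eps_O] bigo_ln by blast
qed

end
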